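(* Let $G=S_\infty$ be the permutation group of $\mathbb{Z}$ with the pointwise convergence topology, let $<$ be the usual order on $\mathbb{Z}$ and let $H=\{g\in G: g\cdot{<}={<}\}$ (the group of order-preserving bijections of $\mathbb{Z}$). Then $(G,H)$ is maximally relatively extremely amenable: $(G,H)$ is relatively extremely amenable, and for every subgroup $E$ with $H\subset E\subset G$ such that $(G,E)$ is relatively extremely amenable, $E=H$.
   Context: A $G$-space is a compact Hausdorff space with a continuous action of $G$. The pair $(G,H)$, with $H\subset G$ a subgroup, is relatively extremely amenable if every $G$-space $X$ has an $H$-fixed point, i.e. some $x_0\in X$ with $hx_0=x_0$ for all $h\in H$. $G$ acts on linear orderings of $\mathbb{Z}$ by $a\,(g\cdot\prec)\,b \iff g^{-1}(a)\prec g^{-1}(b)$. *)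

theory Defs
  imports "HOL-Analysis.Analysis"
begin

text \<open>The symmetric group S_infinity of Z. The type int => int carries the product
  (pointwise convergence) topology, int being discrete; G gets the subspace topology.\<close>
definition Sinf :: "(int \<Rightarrow> int) set" where
  "Sinf = {g. bij g}"

definition order_act :: "(int \<Rightarrow> int) \<Rightarrow> (int \<Rightarrow> int \<Rightarrow> bool) \<Rightarrow> (int \<Rightarrow> int \<Rightarrow> bool)" where
  "order_act g R = (\<lambda>a b. R (inv g a) (inv g b))"

definition H_ord :: "(int \<Rightarrow> int) set" where
  "H_ord = {g \<in> Sinf. order_act g (<) = (<)}"

definition perm_subgroup :: "('b \<Rightarrow> 'b) set \<Rightarrow> ('b \<Rightarrow> 'b) set \<Rightarrow> bool" where
  "perm_subgroup E G \<longleftrightarrow> E \<subseteq> G \<and> id \<in> E \<and> (\<forall>g\<in>E. \<forall>h\<in>E. g \<circ> h \<in> E) \<and> (\<forall>g\<in>E. inv g \<in> E)"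

definition G_space :: "('b::topological_space \<Rightarrow> 'b) set \<Rightarrow> 'a topology \<Rightarrow> (('b \<Rightarrow> 'b) \<Rightarrow> 'a \<Rightarrow> 'a) \<Rightarrow> bool" where
  "G_space G X act \<longleftrightarrow>
     compact_space X \<and> Hausdorff_space X \<and> topspace X \<noteq> {} \<and>
     continuous_map (prod_topology (top_of_set G) X) X (\<lambda>(g, x). act g x) \<and>
     (\<forall>x\<in>topspace X. act id x = x) \<and>
     (\<forall>g\<in>G. \<forall>h\<in>G. \<forall>x\<in>topspace X. act (g \<circ> h) x = act g (act h x))"

text \<open>(G,H) relatively extremely amenable, for G-spaces whose points lie in type 'a.\<close>
definition rel_ext_amenable :: "'a itself \<Rightarrow> ('b::topological_space \<Rightarrow> 'b) set \<Rightarrow> ('b \<Rightarrow> 'b) set \<Rightarrow> bool" where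
  "rel_ext_amenable _ G H \<longleftrightarrow>
     (\<forall>(X::'a topology) act. G_space G X act \<longrightarrow> (\<exists>x0\<in>topspace X. \<forall>h\<in>H. act h x0 = x0))"

end

theory Submission
  imports Defs "HOL-Library.Ramsey"
begin

text \<open>
  Relative extreme amenability.  \<open>H_ord\<close> is exactly the group of translations, so it suffices
  that every compact \<open>Sinf\<close>-space \<open>X\<close> has a point fixed by the unit translation.  If not, a
  compactness argument covers \<open>X\<close> by finitely many open sets \<open>W y\<close>, each mapped by the
  pointwise stabiliser of a finite set into a set \<open>U y\<close> disjoint from its translate.  Colouring
  each \<open>\<sigma> \<in> Sinf\<close> by a cell containing \<open>\<sigma>\<inverse> x0\<close>, Ramsey's theorem on subsets of \<open>\<int>\<close> produces
  \<open>\<sigma>\<close> for which \<open>\<sigma>\<inverse> x0\<close> and its translate lie in the same \<open>U y\<close>, a contradiction.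

  The strict linear orders of \<open>\<int>\<close> form a compact \<open>Sinf\<close>-space.  A fixed point of a
  larger subgroup \<open>E\<close> is a translation-invariant order, i.e. \<open><\<close> or \<open>>\<close>, whose stabiliser is
  \<open>H_ord\<close>.
\<close>

lemma Sinf_id: "id \<in> Sinf"
  by (simp add: Sinf_def)

lemma Sinf_comp: "g \<in> Sinf \<Longrightarrow> h \<in> Sinf \<Longrightarrow> g \<circ> h \<in> Sinf"
  by (simp add: Sinf_def bij_comp)

lemma Sinf_inv: "g \<in> Sinf \<Longrightarrow> inv g \<in> Sinf"
  by (simp add: Sinf_def bij_imp_bij_inv)

lemma Sinf_inv_cancel: "g \<in> Sinf \<Longrightarrow> inv g (g n) = n" "g \<in> Sinf \<Longrightarrow> g (inv g n) = n"
  by (simp_all add: Sinf_def bij_is_inj bij_is_surj surj_f_inv_f)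

text \<open>The pointwise stabiliser of a set of integers; for finite sets these subgroups form a
  neighbourhood base of the identity in the topology of pointwise convergence.\<close>
definition pstab :: "int set \<Rightarrow> (int \<Rightarrow> int) set" where
  "pstab F = {g \<in> Sinf. \<forall>n\<in>F. g n = n}"

text \<open>Every neighbourhood of the identity in \<open>Sinf\<close> contains the pointwise stabiliser of
  a finite set: a basic open set of the product topology constrains only finitely many coordinates.\<close>
lemma Sinf_nhd_contains_pstab:
  assumes "openin (top_of_set Sinf) V" "id \<in> V"
  obtains F where "finite F" "pstab F \<subseteq> V"
proof -
  obtain Op where Op: "open Op" "V = Sinf \<inter> Op"
    using assms(1) by (auto simp: openin_open)
  have "openin (product_topology (\<lambda>i. euclidean) UNIV) Op" "id \<in> Op"
    using Op assms(2) by (auto simp: open_fun_def)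
  then have "\<exists>X. id \<in> (\<Pi>\<^sub>E i\<in>UNIV. X i) \<and> (\<forall>i. openin euclidean (X i)) \<and>
      finite {i. X i \<noteq> topspace euclidean} \<and> (\<Pi>\<^sub>E i\<in>UNIV. X i) \<subseteq> Op"
    by (rule product_topology_open_contains_basis)
  then obtain X where X: "id \<in> (\<Pi>\<^sub>E i\<in>UNIV. X i)" "finite {i. X i \<noteq> topspace euclidean}"
      "(\<Pi>\<^sub>E i\<in>UNIV. X i) \<subseteq> Op"
    by blast
  have "g \<in> Op" if "g \<in> pstab {i. X i \<noteq> topspace euclidean}" for g
  proof -
    have "g i \<in> X i" for i
      using that X(1) by (cases "X i = topspace euclidean") (auto simp: pstab_def PiE_iff)
    then show ?thesis using X(3) by (auto simp: PiE_iff)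
  qed
  then show ?thesis using that[OF X(2)] Op(2) by (auto simp: pstab_def)
qed

lemma G_space_act_comp:
  "G_space G X act \<Longrightarrow> g \<in> G \<Longrightarrow> h \<in> G \<Longrightarrow> x \<in> topspace X \<Longrightarrow> act (g \<circ> h) x = act g (act h x)"
  and G_space_act_id: "G_space G X act \<Longrightarrow> x \<in> topspace X \<Longrightarrow> act id x = x"
  by (simp_all add: G_space_def)

lemma G_space_continuous:
  "G_space G X act \<Longrightarrow> continuous_map (prod_topology (top_of_set G) X) X (\<lambda>(g, x). act g x)"
  by (simp add: G_space_def)

lemma G_space_act_in:
  assumes "G_space G X act" "g \<in> G" "x \<in> topspace X"
  shows "act g x \<in> topspace X"
  using continuous_map_image_subset_topspace[OF G_space_continuous[OF assms(1)]] assms(2,3)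
  by force

lemma G_space_act_continuous:
  assumes GS: "G_space G X act" and g: "g \<in> G"
  shows "continuous_map X X (act g)"
proof -
  have "continuous_map X (prod_topology (top_of_set G) X) (\<lambda>x. (g, x))"
    using g by (intro continuous_map_pairedI) auto
  from continuous_map_compose[OF this G_space_continuous[OF GS]] show ?thesis
    by (simp add: o_def)
qed

lemma G_space_Sinf_local:
  assumes GS: "G_space Sinf X act" and U: "openin X U" "y \<in> U"
  obtains F W where "finite F" "openin X W" "y \<in> W"
    "\<And>g z. g \<in> pstab F \<Longrightarrow> z \<in> W \<Longrightarrow> act g z \<in> U"
proof -
  define P where "P = {p \<in> topspace (prod_topology (top_of_set Sinf) X). (\<lambda>(g, x). act g x) p \<in> U}"
  have P_open: "openin (prod_topology (top_of_set Sinf) X) P"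
    unfolding P_def using openin_continuous_map_preimage[OF G_space_continuous[OF GS] U(1)] .
  have "y \<in> topspace X"
    using U openin_subset by blast
  then have "(id, y) \<in> P"
    using U(2) Sinf_id G_space_act_id[OF GS] unfolding P_def by simp
  then obtain V W where VW: "openin (top_of_set Sinf) V" "openin X W" "id \<in> V" "y \<in> W"
      "V \<times> W \<subseteq> P"
    using P_open[unfolded openin_prod_topology_alt, rule_format] by meson
  obtain F where F: "finite F" "pstab F \<subseteq> V"
    using Sinf_nhd_contains_pstab[OF VW(1,3)] .
  have "act g z \<in> U" if "g \<in> pstab F" "z \<in> W" for g z
  proof -
    have "(g, z) \<in> P"
      using F(2) VW(5) that by blast
    then show ?thesis unfolding P_def by simp
  qed
  then show ?thesis
    by (rule that[OF F(1) VW(2,4)])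
qed

definition shift :: "int \<Rightarrow> int \<Rightarrow> int" where
  "shift c = (\<lambda>n. n + c)"

lemma shift_0: "shift 0 = id"
  by (simp add: shift_def id_def)

lemma shift_add: "shift (c + d) = shift c \<circ> shift d"
  by (auto simp: shift_def)

lemma inv_shift: "inv (shift c) = shift (- c)"
  by (rule inv_equality) (auto simp: shift_def)

lemma shift_Sinf: "shift c \<in> Sinf"
proof -
  have "shift c \<circ> shift (- c) = id" "shift (- c) \<circ> shift c = id"
    by (simp_all add: shift_0 flip: shift_add)
  then show ?thesis
    unfolding Sinf_def by (blast intro: o_bij)
qed

lemma order_act_shift: "order_act (shift c) R = (\<lambda>a b. R (a - c) (b - c))"
  unfolding order_act_def inv_shift by (simp add: shift_def)

lemma shift_H_ord: "shift c \<in> H_ord"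
  by (simp add: H_ord_def shift_Sinf order_act_shift)

text \<open>An order automorphism of \<open>(\<int>, <)\<close> maps successors to successors, hence is a shift.\<close>
lemma strict_mono_bij_shift:
  fixes k :: "int \<Rightarrow> int"
  assumes mono: "\<And>a b. k a < k b \<longleftrightarrow> a < b" and surj: "surj k"
  shows "k = shift (k 0)"
proof -
  have succ: "k (n + 1) = k n + 1" for n
  proof (rule ccontr)
    assume "k (n + 1) \<noteq> k n + 1"
    moreover have "k n < k (n + 1)" using mono[of n "n + 1"] by simp
    ultimately have gap: "k n + 1 < k (n + 1)" by simp
    obtain p where p: "k n + 1 = k p" using surjD[OF surj, of "k n + 1"] by blast
    have "k n < k p" "k p < k (n + 1)" using gap by (simp_all flip: p)
    then have "n < p" "p < n + 1" using mono by blast+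
    then show False by simp
  qed
  have kn: "k n = n + k 0" for n
  proof (induction n rule: int_induct[where k = 0])
    case base
    show ?case by simp
  next
    case (step1 i)
    then show ?case using succ[of i] by simp
  next
    case (step2 i)
    then show ?case using succ[of "i - 1"] by simp
  qed
  show ?thesis
    unfolding shift_def by (rule ext) (rule kn)
qed

lemma H_ord_eq_shifts: "H_ord = range shift"
proof
  show "range shift \<subseteq> H_ord" using shift_H_ord by blast
  show "H_ord \<subseteq> range shift"
  proof
    fix h assume h: "h \<in> H_ord"
    then have bij: "bij h" and ord: "order_act h (<) = (<)"
      by (simp_all add: H_ord_def Sinf_def)
    have "inv h a < inv h b \<longleftrightarrow> a < b" for a b
      using fun_cong[OF fun_cong[OF ord, of a], of b] by (simp add: order_act_def)
    then have "inv h = shift (inv h 0)"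
      using bij by (intro strict_mono_bij_shift) (simp_all add: bij_is_surj bij_imp_bij_inv)
    then have "h = inv (shift (inv h 0))"
      using bij by (metis inv_inv_eq)
    then show "h \<in> range shift" by (simp add: inv_shift)
  qed
qed

lemma fixed_by_all_shifts:
  assumes GS: "G_space Sinf X act" and x: "x \<in> topspace X" and fix1: "act (shift 1) x = x"
  shows "act (shift c) x = x"
proof -
  have comp: "act (shift (c + d)) x = act (shift c) (act (shift d) x)" for c d
    using G_space_act_comp[OF GS shift_Sinf shift_Sinf x] by (simp add: shift_add)
  have fix_minus1: "act (shift (- 1)) x = x"
    using comp[of "- 1" 1] fix1 G_space_act_id[OF GS x] by (simp only: add.left_inverse shift_0)
  show ?thesis
  proof (induction c rule: int_induct[where k = 0])
    case base
    then show ?case using G_space_act_id[OF GS x] by (simp only: shift_0)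
  next
    case (step1 i)
    then show ?case using comp[of 1 i] fix1 by (simp add: add.commute)
  next
    case (step2 i)
    then show ?case using comp[of "- 1" i] fix_minus1 by simp
  qed
qed

text \<open>A finite partial injection of \<open>\<int>\<close> extends to a permutation, since both complements
  are countably infinite.\<close>
lemma finite_inj_extends_to_perm:
  fixes f :: "int \<Rightarrow> int"
  assumes "finite D" "inj_on f D"
  obtains \<sigma> where "\<sigma> \<in> Sinf" "\<And>x. x \<in> D \<Longrightarrow> \<sigma> x = f x"
proof -
  let ?A = "UNIV - D" and ?B = "UNIV - f ` D"
  have "infinite ?A" "infinite ?B"
    using assms(1) by (auto intro: Diff_infinite_finite)
  then have "bij_betw (from_nat_into ?A) UNIV ?A" "bij_betw (from_nat_into ?B) UNIV ?B"
    by (simp_all add: bij_betw_from_nat_into)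
  then have h: "bij_betw (from_nat_into ?B \<circ> inv_into UNIV (from_nat_into ?A)) ?A ?B"
    by (blast intro: bij_betw_trans bij_betw_inv_into)
  have "bij_betw f D (f ` D)"
    using assms(2) by (rule inj_on_imp_bij_betw)
  then have "bij_betw (\<lambda>x. if x \<in> D then f x else (from_nat_into ?B \<circ> inv_into UNIV (from_nat_into ?A)) x)
      (D \<union> ?A) (f ` D \<union> ?B)"
    using h by (rule bij_betw_disjoint_Un) auto
  then show ?thesis
    using that by (simp add: Sinf_def)
qed

lemma distinct_list_placement:
  fixes xs :: "int list"
  assumes "distinct xs"
  obtains \<sigma> where "\<sigma> \<in> Sinf" "\<And>j. j < length xs \<Longrightarrow> \<sigma> (b + int j) = xs ! j"
proof -
  let ?D = "{b..<b + int (length xs)}"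
  have "inj_on (\<lambda>n. xs ! nat (n - b)) ?D"
  proof (rule inj_onI)
    fix x y assume xy: "x \<in> ?D" "y \<in> ?D" "xs ! nat (x - b) = xs ! nat (y - b)"
    then have "nat (x - b) = nat (y - b)"
      using assms nth_eq_iff_index_eq[of xs "nat (x - b)" "nat (y - b)"] by auto
    then show "x = y" using xy(1,2) by auto
  qed
  then obtain \<sigma> where "\<sigma> \<in> Sinf" "\<And>n. n \<in> ?D \<Longrightarrow> \<sigma> n = xs ! nat (n - b)"
    using finite_inj_extends_to_perm by blast
  then show ?thesis
    using that by simp
qed

lemma Ramsey_consecutive:
  fixes c :: "int set \<Rightarrow> 'c"
  assumes fin: "finite (c ` nsets UNIV N)"
  obtains s where "sorted s" "distinct s" "length s = Suc N"
    "c (set (take N s)) = c (set (drop 1 s))"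
proof -
  obtain e where e: "bij_betw e (c ` nsets UNIV N) {0..<card (c ` nsets UNIV N)}"
    using ex_bij_betw_finite_nat[OF fin] by blast
  then have "(e \<circ> c) ` nsets UNIV N \<subseteq> {..<card (c ` nsets UNIV N)}"
    by (auto simp: bij_betw_def)
  then obtain Y t where Y: "Y \<subseteq> UNIV" "infinite Y" "t < card (c ` nsets UNIV N)"
      "(e \<circ> c) ` nsets Y N \<subseteq> {t}"
    by (rule Ramsey_nsets[OF infinite_UNIV_int])
  obtain B where B: "B \<subseteq> Y" "finite B" "card B = Suc N"
    using infinite_arbitrarily_large[OF Y(2)] by blast
  define s where "s = sorted_list_of_set B"
  have s: "sorted s" "distinct s" "length s = Suc N" "set s \<subseteq> Y"
    using B unfolding s_def by auto
  let ?A0 = "set (take N s)" and ?A1 = "set (drop 1 s)"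
  have "card ?A0 = N" "card ?A1 = N"
    using s(2,3) by (simp_all add: distinct_card)
  then have A_nsets: "?A0 \<in> nsets Y N" "?A1 \<in> nsets Y N"
    using s(4) set_take_subset[of N s] set_drop_subset[of 1 s] unfolding nsets_def by auto
  have "e (c A) = t" if "A \<in> nsets Y N" for A
    using Y(4) that by (auto simp: image_subset_iff)
  then have "e (c ?A0) = e (c ?A1)"
    using A_nsets by simp
  moreover have "c ?A0 \<in> c ` nsets UNIV N" "c ?A1 \<in> c ` nsets UNIV N"
    using A_nsets nsets_mono[of Y UNIV N] by blast+
  ultimately have "c ?A0 = c ?A1"
    using bij_betw_imp_inj_on[OF e] by (meson inj_onD)
  then show ?thesis
    using that s(1-3) by blast
qed

lemma finite_int_set_in_interval:
  fixes D :: "int set"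
  assumes "finite D"
  obtains a N where "\<And>n. n \<in> D \<Longrightarrow> \<exists>j<N. n = a + int j"
proof -
  obtain k where k: "abs ` D \<subseteq> {..<k}"
    using assms finite_int_iff_bounded by blast
  have "\<exists>j<nat (2 * k). n = - k + int j" if "n \<in> D" for n
  proof -
    have "\<bar>n\<bar> < k" using k that by auto
    then show ?thesis by (intro exI[of _ "nat (n + k)"]) auto
  qed
  then show ?thesis by (rule that)
qed

lemma sorted_placement:
  obtains place where "\<And>A. A \<in> nsets UNIV N \<Longrightarrow> place A \<in> Sinf"
    "\<And>A j. A \<in> nsets UNIV N \<Longrightarrow> j < N \<Longrightarrow> place A (a + int j) = sorted_list_of_set A ! j"
proof -
  have ex: "\<exists>\<sigma>. \<sigma> \<in> Sinf \<and> (\<forall>j<N. \<sigma> (a + int j) = sorted_list_of_set A ! j)"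
    if "A \<in> nsets UNIV N" for A
  proof -
    have len: "length (sorted_list_of_set A) = N"
      using that by (simp add: nsets_def)
    obtain \<sigma> where "\<sigma> \<in> Sinf"
        "\<And>j. j < length (sorted_list_of_set A) \<Longrightarrow> \<sigma> (a + int j) = sorted_list_of_set A ! j"
      using distinct_list_placement[OF distinct_sorted_list_of_set[of A], where b = a] by blast
    then show ?thesis
      unfolding len by blast
  qed
  define place where
    "place A = (SOME \<sigma>. \<sigma> \<in> Sinf \<and> (\<forall>j<N. \<sigma> (a + int j) = sorted_list_of_set A ! j))" for A
  have placed: "place A \<in> Sinf \<and> (\<forall>j<N. place A (a + int j) = sorted_list_of_set A ! j)"
    if "A \<in> nsets UNIV N" for A
    unfolding place_def by (rule someI_ex[OF ex[OF that]])
  show ?thesis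
    by (rule that) (use placed in blast)+
qed

text \<open>Colour the \<open>N\<close>-sets by the colour of their placement on an
  interval containing \<open>D\<close>, and apply \<open>Ramsey_consecutive\<close>.\<close>
lemma Ramsey_shift:
  fixes col :: "(int \<Rightarrow> int) \<Rightarrow> 'c"
  assumes D: "finite D" and fin: "finite (col ` Sinf)"
  obtains \<sigma> \<tau> \<tau>' where "\<sigma> \<in> Sinf" "\<tau> \<in> Sinf" "\<tau>' \<in> Sinf" "col \<tau> = col \<tau>'"
    "\<And>n. n \<in> D \<Longrightarrow> \<tau> n = \<sigma> n" "\<And>n. n \<in> D \<Longrightarrow> \<tau>' n = \<sigma> (n - 1)"
proof -
  obtain a N where D_interval: "\<And>n. n \<in> D \<Longrightarrow> \<exists>j<N. n = a + int j"
    using finite_int_set_in_interval[OF D] by blast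
  obtain place where place: "\<And>A. A \<in> nsets UNIV N \<Longrightarrow> place A \<in> Sinf"
    "\<And>A j. A \<in> nsets UNIV N \<Longrightarrow> j < N \<Longrightarrow> place A (a + int j) = sorted_list_of_set A ! j"
    using sorted_placement[where a = a and N = N] by blast
  have "(\<lambda>A. col (place A)) ` nsets UNIV N \<subseteq> col ` Sinf"
    using place(1) by blast
  then have "finite ((\<lambda>A. col (place A)) ` nsets UNIV N)"
    using fin by (rule finite_subset)
  then obtain s where s: "sorted s" "distinct s" "length s = Suc N"
      "col (place (set (take N s))) = col (place (set (drop 1 s)))"
    by (rule Ramsey_consecutive)
  let ?A0 = "set (take N s)" and ?A1 = "set (drop 1 s)"
  have A_nsets: "?A0 \<in> nsets UNIV N" "?A1 \<in> nsets UNIV N"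
    using s(2,3) by (simp_all add: nsets_def distinct_card)
  have sorted_A: "sorted_list_of_set ?A0 = take N s" "sorted_list_of_set ?A1 = drop 1 s"
    using s(1,2) by (auto intro!: sorted_list_of_set.idem_if_sorted_distinct
        intro: sorted_wrt_take sorted_wrt_drop)
  obtain \<sigma> where \<sigma>: "\<sigma> \<in> Sinf" "\<And>j. j < length s \<Longrightarrow> \<sigma> (a - 1 + int j) = s ! j"
    using distinct_list_placement[OF s(2), where b = "a - 1"] by blast
  show ?thesis
  proof (rule that[OF \<sigma>(1) place(1)[OF A_nsets(2)] place(1)[OF A_nsets(1)] s(4)[symmetric]])
    fix n assume "n \<in> D"
    then obtain j where j: "j < N" "n = a + int j"
      using D_interval by blast
    have "place ?A1 n = s ! Suc j"
      using place(2)[OF A_nsets(2) j(1)] j s(3) unfolding sorted_A by simp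
    also have "\<dots> = \<sigma> n"
      using \<sigma>(2)[of "Suc j"] j s(3) by simp
    finally show "place ?A1 n = \<sigma> n" .
    have "place ?A0 n = s ! j"
      using place(2)[OF A_nsets(1) j(1)] j s(3) unfolding sorted_A by simp
    also have "\<dots> = \<sigma> (n - 1)"
      using \<sigma>(2)[of j] j s(3) by (simp add: algebra_simps)
    finally show "place ?A0 n = \<sigma> (n - 1)" .
  qed
qed

text \<open>If \<open>\<tau>\<close> and \<open>\<sigma>\<close> agree on \<open>F\<close>, then \<open>\<sigma>\<inverse> \<circ> \<tau>\<close> lies in \<open>pstab F\<close>; so whenever \<open>pstab F\<close>
  moves \<open>W\<close> into \<open>U\<close> and \<open>\<tau>\<inverse> x0 \<in> W\<close>, we get \<open>\<sigma>\<inverse> x0 \<in> U\<close>.\<close>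
lemma pstab_transfer:
  assumes GS: "G_space Sinf X act" and x0: "x0 \<in> topspace X"
    and control: "\<And>g z. g \<in> pstab F \<Longrightarrow> z \<in> W \<Longrightarrow> act g z \<in> U"
    and perms: "\<tau> \<in> Sinf" "\<sigma> \<in> Sinf" and agree: "\<And>n. n \<in> F \<Longrightarrow> \<tau> n = \<sigma> n"
    and in_W: "act (inv \<tau>) x0 \<in> W"
  shows "act (inv \<sigma>) x0 \<in> U"
proof -
  have "inv \<sigma> \<circ> \<tau> \<in> pstab F"
    using perms agree Sinf_inv_cancel(1)[OF perms(2)]
    by (simp add: pstab_def Sinf_comp Sinf_inv)
  then have "act (inv \<sigma> \<circ> \<tau>) (act (inv \<tau>) x0) \<in> U"
    using control in_W by blast
  moreover have "act (inv \<sigma> \<circ> \<tau>) (act (inv \<tau>) x0) = act (inv \<sigma> \<circ> \<tau> \<circ> inv \<tau>) x0"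
    using G_space_act_comp[OF GS _ Sinf_inv[OF perms(1)] x0] perms
    by (simp add: Sinf_comp Sinf_inv)
  moreover have "inv \<sigma> \<circ> \<tau> \<circ> inv \<tau> = inv \<sigma>"
    using Sinf_inv_cancel(2)[OF perms(1)] by (simp add: fun_eq_iff)
  ultimately show ?thesis by simp
qed

lemma Hausdorff_displace:
  assumes "Hausdorff_space X" "continuous_map X X f" "y \<in> topspace X" "f y \<noteq> y"
  obtains U where "openin X U" "y \<in> U" "\<And>z. z \<in> U \<Longrightarrow> f z \<notin> U"
proof -
  have "f y \<in> topspace X" "y \<noteq> f y"
    using assms(2-4) continuous_map_image_subset_topspace by fastforce+
  then obtain A B where AB: "openin X A" "openin X B" "y \<in> A" "f y \<in> B" "disjnt A B"
    using assms(1,3) unfolding Hausdorff_space_def by blast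
  define U where "U = A \<inter> {z \<in> topspace X. f z \<in> B}"
  have "openin X U"
    unfolding U_def using AB(1) openin_continuous_map_preimage[OF assms(2) AB(2)] by (rule openin_Int)
  moreover have "y \<in> U"
    using AB(3,4) assms(3) unfolding U_def by simp
  moreover have "f z \<notin> U" if "z \<in> U" for z
    using that AB(5) unfolding U_def disjnt_def by blast
  ultimately show ?thesis by (rule that)
qed

lemma compact_space_pointwise_subcover:
  assumes "compact_space X" and W: "\<And>y. y \<in> topspace X \<Longrightarrow> openin X (W y) \<and> y \<in> W y"
  obtains Y0 where "finite Y0" "Y0 \<subseteq> topspace X" "topspace X \<subseteq> (\<Union>y\<in>Y0. W y)"
proof -
  have "compactin X (topspace X)" "\<forall>V\<in>W ` topspace X. openin X V"
      "topspace X \<subseteq> \<Union>(W ` topspace X)"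
    using assms by (auto simp: compact_space_def)
  then have "\<exists>\<V>. finite \<V> \<and> \<V> \<subseteq> W ` topspace X \<and> topspace X \<subseteq> \<Union>\<V>"
    unfolding compactin_def by blast
  then obtain Y0 where Y0: "finite Y0" "Y0 \<subseteq> topspace X" "topspace X \<subseteq> (\<Union>y\<in>Y0. W y)"
    by (metis finite_subset_image)
  then show ?thesis
    by (rule that)
qed

lemma shift_displacement_cover:
  assumes GS: "G_space Sinf X act" and no_fix: "\<And>x. x \<in> topspace X \<Longrightarrow> act (shift 1) x \<noteq> x"
  obtains Y0 U F W where "finite Y0" "Y0 \<subseteq> topspace X" "topspace X \<subseteq> (\<Union>y\<in>Y0. W y)"
    "\<And>y. y \<in> Y0 \<Longrightarrow> finite (F y)"
    "\<And>y z. y \<in> Y0 \<Longrightarrow> z \<in> U y \<Longrightarrow> act (shift 1) z \<notin> U y"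
    "\<And>y g z. y \<in> Y0 \<Longrightarrow> g \<in> pstab (F y) \<Longrightarrow> z \<in> W y \<Longrightarrow> act g z \<in> U y"
proof -
  have HX: "Hausdorff_space X" and CX: "compact_space X"
    using GS by (simp_all add: G_space_def)
  have cont: "continuous_map X X (act (shift 1))"
    using G_space_act_continuous[OF GS shift_Sinf] .
  have "\<exists>U F W. (\<forall>z\<in>U. act (shift 1) z \<notin> U) \<and> finite F \<and> openin X W \<and> y \<in> W \<and>
      (\<forall>g\<in>pstab F. \<forall>z\<in>W. act g z \<in> U)" if y: "y \<in> topspace X" for y
  proof -
    obtain U where U: "openin X U" "y \<in> U" "\<And>z. z \<in> U \<Longrightarrow> act (shift 1) z \<notin> U"
      using Hausdorff_displace[OF HX cont y no_fix[OF y]] by blast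
    obtain F W where "finite F" "openin X W" "y \<in> W"
        "\<And>g z. g \<in> pstab F \<Longrightarrow> z \<in> W \<Longrightarrow> act g z \<in> U"
      using G_space_Sinf_local[OF GS U(1,2)] by blast
    then show ?thesis
      using U(3) by (intro exI[of _ U] exI[of _ F] exI[of _ W]) auto
  qed
  then obtain U F W where UFW: "\<And>y. y \<in> topspace X \<Longrightarrow> (\<forall>z\<in>U y. act (shift 1) z \<notin> U y) \<and>
      finite (F y) \<and> openin X (W y) \<and> y \<in> W y \<and> (\<forall>g\<in>pstab (F y). \<forall>z\<in>W y. act g z \<in> U y)"
    by metis
  have "openin X (W y) \<and> y \<in> W y" if "y \<in> topspace X" for y
    using UFW[OF that] by blast
  then obtain Y0 where Y0: "finite Y0" "Y0 \<subseteq> topspace X" "topspace X \<subseteq> (\<Union>y\<in>Y0. W y)"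
    using compact_space_pointwise_subcover[OF CX] by blast
  have in_X: "y \<in> topspace X" if "y \<in> Y0" for y
    using Y0(2) that by blast
  show ?thesis
  proof (rule that[OF Y0])
    fix y assume "y \<in> Y0"
    then show "finite (F y)"
      using UFW[OF in_X] by blast
  next
    fix y z assume "y \<in> Y0" "z \<in> U y"
    then show "act (shift 1) z \<notin> U y"
      using UFW[OF in_X] by blast
  next
    fix y g z assume "y \<in> Y0" "g \<in> pstab (F y)" "z \<in> W y"
    then show "act g z \<in> U y"
      using UFW[OF in_X] by blast
  qed
qed

text \<open>Otherwise colour \<open>\<sigma>\<close> by
  a cell \<open>W y\<close> containing \<open>\<sigma>\<inverse> x0\<close>; \<open>Ramsey_shift\<close> yields \<open>\<sigma>\<close> such that both \<open>\<sigma>\<inverse> x0\<close> and its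
  translate \<open>(\<sigma> \<circ> shift (-1))\<inverse> x0\<close> lie in the same displaced set \<open>U y\<close>, a contradiction.\<close>
lemma shift_has_fixed_point:
  assumes GS: "G_space Sinf X act"
  shows "\<exists>x\<in>topspace X. act (shift 1) x = x"
proof (rule ccontr)
  assume "\<not> ?thesis"
  then obtain Y0 U F W where Y0: "finite Y0" "Y0 \<subseteq> topspace X" "topspace X \<subseteq> (\<Union>y\<in>Y0. W y)"
    and fin_F: "\<And>y. y \<in> Y0 \<Longrightarrow> finite (F y)"
    and displaced: "\<And>y z. y \<in> Y0 \<Longrightarrow> z \<in> U y \<Longrightarrow> act (shift 1) z \<notin> U y"
    and control: "\<And>y g z. y \<in> Y0 \<Longrightarrow> g \<in> pstab (F y) \<Longrightarrow> z \<in> W y \<Longrightarrow> act g z \<in> U y"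
    using shift_displacement_cover[OF GS] by metis
  have "topspace X \<noteq> {}"
    using GS unfolding G_space_def by blast
  then obtain x0 where x0: "x0 \<in> topspace X"
    by blast
  have "\<exists>y\<in>Y0. act (inv \<sigma>) x0 \<in> W y" if "\<sigma> \<in> Sinf" for \<sigma>
    using G_space_act_in[OF GS Sinf_inv[OF that] x0] Y0(3) by blast
  then obtain cell where cell: "\<And>\<sigma>. \<sigma> \<in> Sinf \<Longrightarrow> cell \<sigma> \<in> Y0 \<and> act (inv \<sigma>) x0 \<in> W (cell \<sigma>)"
    by metis
  have "finite (\<Union>y\<in>Y0. F y)"
    using Y0(1) fin_F by blast
  moreover have "finite (cell ` Sinf)"
    using cell finite_subset[OF _ Y0(1)] by blast
  ultimately obtain \<sigma> \<tau> \<tau>' where perms: "\<sigma> \<in> Sinf" "\<tau> \<in> Sinf" "\<tau>' \<in> Sinf"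
    and same_cell: "cell \<tau> = cell \<tau>'"
    and agree: "\<And>n. n \<in> (\<Union>y\<in>Y0. F y) \<Longrightarrow> \<tau> n = \<sigma> n"
    and agree': "\<And>n. n \<in> (\<Union>y\<in>Y0. F y) \<Longrightarrow> \<tau>' n = \<sigma> (n - 1)"
    using Ramsey_shift by blast
  define y where "y = cell \<tau>"
  have y: "y \<in> Y0" "act (inv \<tau>) x0 \<in> W y" "act (inv \<tau>') x0 \<in> W y"
    using cell[OF perms(2)] cell[OF perms(3)] same_cell unfolding y_def by auto
  define \<rho> where "\<rho> = \<sigma> \<circ> shift (- 1)"
  have \<rho>: "\<rho> \<in> Sinf" "inv \<rho> = shift 1 \<circ> inv \<sigma>"
    using perms(1) shift_Sinf[of "- 1"] unfolding \<rho>_def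
    by (simp_all add: Sinf_comp) (simp add: Sinf_def o_inv_distrib inv_shift)
  have "act (inv \<sigma>) x0 \<in> U y"
    using pstab_transfer[OF GS x0 control[OF y(1)] perms(2,1) _ y(2)] agree y(1) by blast
  moreover have "act (inv \<rho>) x0 \<in> U y"
    using pstab_transfer[OF GS x0 control[OF y(1)] perms(3) \<rho>(1) _ y(3)] agree' y(1)
    by (auto simp: \<rho>_def shift_def)
  moreover have "act (inv \<rho>) x0 = act (shift 1) (act (inv \<sigma>) x0)"
    using G_space_act_comp[OF GS shift_Sinf Sinf_inv[OF perms(1)] x0] \<rho>(2) by simp
  ultimately show False
    using displaced[OF y(1)] by simp
qed

lemma rel_ext_amenable_H_ord: "rel_ext_amenable TYPE('a) Sinf H_ord"
  unfolding rel_ext_amenable_def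
proof (intro allI impI)
  fix X :: "'a topology" and act
  assume GS: "G_space Sinf X act"
  then obtain x0 where x0: "x0 \<in> topspace X" "act (shift 1) x0 = x0"
    using shift_has_fixed_point by blast
  then have "\<forall>h\<in>H_ord. act h x0 = x0"
    using fixed_by_all_shifts[OF GS] by (auto simp: H_ord_eq_shifts)
  then show "\<exists>x0\<in>topspace X. \<forall>h\<in>H_ord. act h x0 = x0"
    using x0(1) by blast
qed

lemma compact_Hausdorff_function_space:
  assumes "compact_space (euclidean :: 'b::topological_space topology)"
    and "Hausdorff_space (euclidean :: 'b topology)"
  shows "compact_space (euclidean :: ('i \<Rightarrow> 'b) topology)"
    and "Hausdorff_space (euclidean :: ('i \<Rightarrow> 'b) topology)"
proof -
  have "compact_space (product_topology (\<lambda>i::'i. euclidean :: 'b topology) UNIV)"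
    using assms(1) compact_space_product_topology by blast
  then show "compact_space (euclidean :: ('i \<Rightarrow> 'b) topology)"
    by (simp add: euclidean_product_topology)
  have "Hausdorff_space (product_topology (\<lambda>i::'i. euclidean :: 'b topology) UNIV)"
    using assms(2) Hausdorff_space_product_topology by blast
  then show "Hausdorff_space (euclidean :: ('i \<Rightarrow> 'b) topology)"
    by (simp add: euclidean_product_topology)
qed

lemma compact_Hausdorff_relations:
  "compact_space (euclidean :: ('i \<Rightarrow> 'j \<Rightarrow> bool) topology)"
  "Hausdorff_space (euclidean :: ('i \<Rightarrow> 'j \<Rightarrow> bool) topology)"
proof -
  have bool: "compact_space (euclidean :: bool topology)" "Hausdorff_space (euclidean :: bool topology)"
    unfolding compact_space_def Hausdorff_space_def
    by (simp add: finite_imp_compact) (intro allI impI exI[of _ "{_}"], auto simp: disjnt_def open_discrete)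
  note rows = compact_Hausdorff_function_space[where 'i = 'j, OF bool]
  show "compact_space (euclidean :: ('i \<Rightarrow> 'j \<Rightarrow> bool) topology)"
    "Hausdorff_space (euclidean :: ('i \<Rightarrow> 'j \<Rightarrow> bool) topology)"
    by (rule compact_Hausdorff_function_space[OF rows])+
qed

lemma open_closed_eval:
  fixes A :: "'b::discrete_topology set"
  shows "open {f :: 'i \<Rightarrow> 'b. f i \<in> A}" and "closed {f :: 'i \<Rightarrow> 'b. f i \<in> A}"
proof -
  have "\<forall>B. open B \<longrightarrow> open ((\<lambda>f :: 'i \<Rightarrow> 'b. f i) -` B)"
    using continuous_on_product_coordinates[of i] unfolding continuous_on_open_vimage[OF open_UNIV]
    by simp
  then have "open ((\<lambda>f :: 'i \<Rightarrow> 'b. f i) -` A)" "closed ((\<lambda>f :: 'i \<Rightarrow> 'b. f i) -` A)"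
    unfolding closed_def vimage_Compl[symmetric] by (simp_all add: open_discrete)
  then show "open {f :: 'i \<Rightarrow> 'b. f i \<in> A}" "closed {f :: 'i \<Rightarrow> 'b. f i \<in> A}"
    by (simp_all add: vimage_def)
qed

lemma continuous_on_eval2: "continuous_on UNIV (\<lambda>R :: 'i \<Rightarrow> 'j \<Rightarrow> 'b::topological_space. R a b)"
  by (rule continuous_on_product_then_coordinatewise[OF continuous_on_product_coordinates])

lemma open_closed_eval2:
  fixes A :: "'b::discrete_topology set"
  shows "open {R :: 'i \<Rightarrow> 'j \<Rightarrow> 'b. R a b \<in> A}" and "closed {R :: 'i \<Rightarrow> 'j \<Rightarrow> 'b. R a b \<in> A}"
proof -
  have "\<forall>B. open B \<longrightarrow> open ((\<lambda>R :: 'i \<Rightarrow> 'j \<Rightarrow> 'b. R a b) -` B)"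
    using continuous_on_eval2[of a b] by (simp add: continuous_on_open_vimage)
  then have "open ((\<lambda>R :: 'i \<Rightarrow> 'j \<Rightarrow> 'b. R a b) -` A)"
      "closed ((\<lambda>R :: 'i \<Rightarrow> 'j \<Rightarrow> 'b. R a b) -` A)"
    unfolding closed_def vimage_Compl[symmetric] by (simp_all add: open_discrete)
  then show "open {R :: 'i \<Rightarrow> 'j \<Rightarrow> 'b. R a b \<in> A}" "closed {R :: 'i \<Rightarrow> 'j \<Rightarrow> 'b. R a b \<in> A}"
    by (simp_all add: vimage_def)
qed

definition strict_linorders :: "(int \<Rightarrow> int \<Rightarrow> bool) set" where
  "strict_linorders = {R. (\<forall>a. \<not> R a a) \<and> (\<forall>a b c. R a b \<longrightarrow> R b c \<longrightarrow> R a c) \<and>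
     (\<forall>a b. a \<noteq> b \<longrightarrow> R a b \<or> R b a)}"

lemma closed_strict_linorders: "closed strict_linorders"
proof -
  have eval: "closed {R :: int \<Rightarrow> int \<Rightarrow> bool. R a b}" "closed {R :: int \<Rightarrow> int \<Rightarrow> bool. \<not> R a b}"
    for a b
    using open_closed_eval2(2)[of a b "{True}"] open_closed_eval2(2)[of a b "{False}"] by simp_all
  have "closed {R :: int \<Rightarrow> int \<Rightarrow> bool. \<forall>a. \<not> R a a}"
    by (intro closed_Collect_all eval)
  moreover have "closed {R :: int \<Rightarrow> int \<Rightarrow> bool. \<forall>a b c. R a b \<longrightarrow> R b c \<longrightarrow> R a c}"
    unfolding imp_conv_disj by (intro closed_Collect_all closed_Collect_disj eval)
  moreover have "closed {R :: int \<Rightarrow> int \<Rightarrow> bool. \<forall>a b. a \<noteq> b \<longrightarrow> R a b \<or> R b a}"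
    unfolding imp_conv_disj by (intro closed_Collect_all closed_Collect_disj eval closed_Collect_const)
  ultimately show ?thesis
    unfolding strict_linorders_def by (intro closed_Collect_conj)
qed

lemma order_act_id: "order_act id R = R"
  by (simp add: order_act_def inv_id)

lemma order_act_comp:
  "g \<in> Sinf \<Longrightarrow> h \<in> Sinf \<Longrightarrow> order_act (g \<circ> h) R = order_act g (order_act h R)"
  by (simp add: order_act_def Sinf_def o_inv_distrib)

lemma order_act_strict_linorders:
  assumes "g \<in> Sinf" "R \<in> strict_linorders"
  shows "order_act g R \<in> strict_linorders"
proof -
  have "inj (inv g)"
    using assms(1) by (simp add: Sinf_def bij_imp_bij_inv bij_is_inj)
  then show ?thesis
    using assms(2) unfolding strict_linorders_def order_act_def by (simp, metis injD)
qed

lemma continuous_map_locally_constant: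
  fixes f :: "'a \<Rightarrow> 'b::discrete_topology"
  assumes "\<And>x. x \<in> topspace Z \<Longrightarrow> \<exists>T. openin Z T \<and> x \<in> T \<and> (\<forall>y\<in>T. f y = f x)"
  shows "continuous_map Z euclidean f"
proof -
  have "openin Z {x \<in> topspace Z. f x \<in> U}" for U
  proof (subst openin_subopen, intro ballI)
    fix x assume "x \<in> {x \<in> topspace Z. f x \<in> U}"
    then have x: "x \<in> topspace Z" "f x \<in> U" by simp_all
    then obtain T where T: "openin Z T" "x \<in> T" "\<forall>y\<in>T. f y = f x"
      using assms by blast
    have "y \<in> {x \<in> topspace Z. f x \<in> U}" if "y \<in> T" for y
      using openin_subset[OF T(1)] T(3) x(2) that by (metis (mono_tags, lifting) mem_Collect_eq subsetD)
    then show "\<exists>T. openin Z T \<and> x \<in> T \<and> T \<subseteq> {x \<in> topspace Z. f x \<in> U}"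
      using T(1,2) by blast
  qed
  then show ?thesis
    unfolding continuous_map_def by simp
qed

lemma continuous_map_relation_valued:
  fixes F :: "'a \<Rightarrow> 'i \<Rightarrow> 'j \<Rightarrow> 'b::topological_space"
  assumes "\<And>i j. continuous_map Z euclidean (\<lambda>x. F x i j)"
  shows "continuous_map Z euclidean F"
proof -
  have "continuous_map Z (product_topology (\<lambda>_. euclidean) UNIV) (\<lambda>x. F x i)" for i
    unfolding continuous_map_componentwise_UNIV using assms by simp
  then have "continuous_map Z euclidean (\<lambda>x. F x i)" for i
    by (simp only: euclidean_product_topology)
  then have "continuous_map Z (product_topology (\<lambda>_. euclidean) UNIV) F"
    unfolding continuous_map_componentwise_UNIV by simp
  then show ?thesis
    by (simp only: euclidean_product_topology)
qed

text \<open>Each value \<open>(g \<cdot> R) a b = R (g\<inverse> a) (g\<inverse> b)\<close> only depends on \<open>g\<inverse> a\<close>, \<open>g\<inverse> b\<close> and one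
  value of \<open>R\<close>, so it is locally constant: the action is continuous.\<close>
lemma order_act_continuous:
  "continuous_map (prod_topology (top_of_set Sinf) (top_of_set S)) euclidean (\<lambda>(g, R). order_act g R)"
proof (rule continuous_map_relation_valued, rule continuous_map_locally_constant)
  fix a b and p assume "p \<in> topspace (prod_topology (top_of_set Sinf) (top_of_set S))"
  then obtain g R where p: "p = (g, R)" "g \<in> Sinf" "R \<in> S"
    by auto
  define m n where "m = inv g a" and "n = inv g b"
  define T where "T = (Sinf \<inter> ({g'. g' m \<in> {a}} \<inter> {g'. g' n \<in> {b}})) \<times> (S \<inter> {R'. R' m n \<in> {R m n}})"
  have "openin (prod_topology (top_of_set Sinf) (top_of_set S)) T"
    unfolding T_def openin_prod_Times_iff
    by (intro disjI2 conjI openin_open_Int open_Int open_closed_eval open_closed_eval2)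
  moreover have "p \<in> T"
    using p by (simp add: T_def m_def n_def Sinf_inv_cancel(2))
  moreover have "(case q of (g', R') \<Rightarrow> order_act g' R') a b = order_act g R a b" if "q \<in> T" for q
  proof -
    obtain g' R' where q: "q = (g', R')" by fastforce
    have g': "g' \<in> Sinf" "g' m = a" "g' n = b" and R': "R' m n = R m n"
      using that unfolding q by (simp_all add: T_def)
    then have "inv g' a = m" "inv g' b = n"
      using Sinf_inv_cancel(1)[of g' m] Sinf_inv_cancel(1)[of g' n] by simp_all
    then show ?thesis
      unfolding q order_act_def m_def[symmetric] n_def[symmetric] using R' by simp
  qed
  ultimately show "\<exists>T. openin (prod_topology (top_of_set Sinf) (top_of_set S)) T \<and> p \<in> T \<and>
      (\<forall>q\<in>T. (case q of (g, R) \<Rightarrow> order_act g R) a b = (case p of (g, R) \<Rightarrow> order_act g R) a b)"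
    unfolding p(1) prod.case by blast
qed

lemma G_space_strict_linorders: "G_space Sinf (top_of_set strict_linorders) order_act"
  unfolding G_space_def
proof (intro conjI ballI)
  have "compact (UNIV :: (int \<Rightarrow> int \<Rightarrow> bool) set)"
    using compact_Hausdorff_relations(1) unfolding compact_space_def by simp
  then have "compact strict_linorders"
    using compact_Int_closed[OF _ closed_strict_linorders, of UNIV] by simp
  then show "compact_space (top_of_set strict_linorders)"
    by (simp add: compact_space_subtopology)
  show "Hausdorff_space (top_of_set strict_linorders)"
    using compact_Hausdorff_relations(2) by (rule Hausdorff_space_subtopology)
  have "(<) \<in> strict_linorders"
    by (auto simp: strict_linorders_def)
  then show "topspace (top_of_set strict_linorders) \<noteq> {}"
    by auto
  show "continuous_map (prod_topology (top_of_set Sinf) (top_of_set strict_linorders))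
      (top_of_set strict_linorders) (\<lambda>(g, R). order_act g R)"
    unfolding continuous_map_in_subtopology
    using order_act_continuous order_act_strict_linorders by auto
qed (simp_all add: order_act_id order_act_comp)

lemma pullback_along_injection:
  fixes f :: "'b \<Rightarrow> 'c" and X :: "'b topology"
  assumes inj: "inj f"
  defines "X' \<equiv> pullback_topology (f ` topspace X) (inv f) X"
  shows "topspace X' = f ` topspace X" and "continuous_map X X' f"
    and "continuous_map X' X (inv f)" and "X homeomorphic_space X'"
proof -
  have inv_f: "inv f (f x) = x" for x
    using inj by simp
  show top: "topspace X' = f ` topspace X"
    unfolding X'_def topspace_pullback_topology using inv_f by auto
  have "inv f \<circ> f = id"
    using inj by simp
  then show cont_f: "continuous_map X X' f"
    unfolding X'_def by (intro continuous_map_pullback') auto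
  have "continuous_map X' X (id \<circ> inv f)"
    unfolding X'_def by (rule continuous_map_pullback) simp
  then show cont_inv: "continuous_map X' X (inv f)"
    by simp
  have "homeomorphic_maps X X' f (inv f)"
    unfolding homeomorphic_maps_def using cont_f cont_inv inv_f top by auto
  then show "X homeomorphic_space X'"
    unfolding homeomorphic_space_def by blast
qed

text \<open>This is needed
  because the statement fixes the type \<open>(int \<Rightarrow> int) set set\<close> of the test spaces.\<close>
lemma G_space_transfer:
  fixes f :: "'b \<Rightarrow> 'c"
  assumes GS: "G_space G X act" and inj: "inj f"
  defines "X' \<equiv> pullback_topology (f ` topspace X) (inv f) X"
  shows "G_space G X' (\<lambda>g y. f (act g (inv f y)))" and "topspace X' = f ` topspace X"
proof -
  have inv_f: "inv f (f x) = x" for x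
    using inj by simp
  show top: "topspace X' = f ` topspace X"
    unfolding X'_def by (rule pullback_along_injection(1)[OF inj])
  have cont_f: "continuous_map X X' f"
    unfolding X'_def by (rule pullback_along_injection(2)[OF inj])
  have cont_inv: "continuous_map X' X (inv f)"
    unfolding X'_def by (rule pullback_along_injection(3)[OF inj])
  have homeo: "X homeomorphic_space X'"
    unfolding X'_def by (rule pullback_along_injection(4)[OF inj])
  have "continuous_map (prod_topology (top_of_set G) X') (prod_topology (top_of_set G) X)
      (\<lambda>p. (fst p, inv f (snd p)))"
    by (intro continuous_map_pairedI continuous_map_fst
        continuous_map_compose[OF continuous_map_snd cont_inv, unfolded o_def])
  then have "continuous_map (prod_topology (top_of_set G) X') X'
      (f \<circ> ((\<lambda>(g, x). act g x) \<circ> (\<lambda>p. (fst p, inv f (snd p)))))"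
    by (intro continuous_map_compose[OF continuous_map_compose[OF _ G_space_continuous[OF GS]] cont_f])
  moreover have "f \<circ> ((\<lambda>(g, x). act g x) \<circ> (\<lambda>p. (fst p, inv f (snd p)))) =
      (\<lambda>(g, y). f (act g (inv f y)))"
    by (auto simp: fun_eq_iff)
  ultimately have cont:
    "continuous_map (prod_topology (top_of_set G) X') X' (\<lambda>(g, y). f (act g (inv f y)))"
    by simp
  have "compact_space X" "Hausdorff_space X" "topspace X \<noteq> {}"
    using GS unfolding G_space_def by blast+
  then have space: "compact_space X'" "Hausdorff_space X'" "topspace X' \<noteq> {}"
    using homeomorphic_compact_space[OF homeo] homeomorphic_Hausdorff_space[OF homeo] top
    by simp_all
  show "G_space G X' (\<lambda>g y. f (act g (inv f y)))"
    unfolding G_space_def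
  proof (intro conjI ballI cont space)
    fix y assume "y \<in> topspace X'"
    then obtain x where x: "x \<in> topspace X" "y = f x"
      using top by auto
    then show "f (act id (inv f y)) = y"
      using G_space_act_id[OF GS] inv_f by simp
    fix g h assume "g \<in> G" "h \<in> G"
    then show "f (act (g \<circ> h) (inv f y)) = f (act g (inv f (f (act h (inv f y)))))"
      using x G_space_act_comp[OF GS] inv_f by simp
  qed
qed

definition encode_relation :: "(int \<Rightarrow> int \<Rightarrow> bool) \<Rightarrow> (int \<Rightarrow> int) set set" where
  "encode_relation R = {{f} | f. R (f 0) (f 1)}"

lemma inj_encode_relation: "inj encode_relation"
proof (rule injI)
  fix R R' :: "int \<Rightarrow> int \<Rightarrow> bool"
  assume eq: "encode_relation R = encode_relation R'"
  have mem: "{p} \<in> encode_relation Q \<longleftrightarrow> Q (p 0) (p 1)" for Q p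
    unfolding encode_relation_def by auto
  have "R a b = R' a b" for a b
    using mem[of "\<lambda>n. if n = 0 then a else b" R] mem[of "\<lambda>n. if n = 0 then a else b" R'] eq
    by simp
  then show "R = R'"
    by (intro ext)
qed

lemma shift_invariant_linorder_less:
  assumes R: "R \<in> strict_linorders" and inv: "\<And>a b c. R (a + c) (b + c) = R a b"
    and R01: "R 0 1"
  shows "R = (<)"
proof -
  have irrefl: "\<not> R a a" and trans: "R a b \<Longrightarrow> R b c \<Longrightarrow> R a c" for a b c
    using R unfolding strict_linorders_def by blast+
  have step: "R n (n + 1)" for n
    using inv[where a = 0 and b = 1 and c = n] R01 by (simp add: add.commute)
  have up: "R a (a + int k + 1)" for a k
  proof (induction k)
    case 0
    then show ?case using step[of a] by simp
  next
    case (Suc k)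
    then show ?case
      using trans[OF Suc.IH step[of "a + int k + 1"]] by (simp add: algebra_simps)
  qed
  have less: "R a b" if "a < b" for a b
    using up[of a "nat (b - a - 1)"] that by simp
  have "a < b" if "R a b" for a b
  proof (rule ccontr)
    assume "\<not> a < b"
    then consider "b = a" | "b < a" by linarith
    then show False
    proof cases
      case 1
      then show False using that irrefl by simp
    next
      case 2
      then show False using trans[OF that less[OF 2]] irrefl by simp
    qed
  qed
  then show ?thesis
    using less by (intro ext) blast
qed

lemma shift_invariant_linorder:
  assumes R: "R \<in> strict_linorders" and inv: "\<And>a b c. R (a + c) (b + c) = R a b"
  shows "R = (<) \<or> (\<lambda>a b. R b a) = (<)"
proof (cases "R 0 1")
  case True
  then show ?thesis
    using shift_invariant_linorder_less[OF R inv] by blast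
next
  case False
  have irrefl: "\<forall>a. \<not> R a a" and trans: "\<forall>a b c. R a b \<longrightarrow> R b c \<longrightarrow> R a c"
    and total: "\<forall>a b. a \<noteq> b \<longrightarrow> R a b \<or> R b a"
    using R by (simp_all add: strict_linorders_def)
  have R10: "R 1 0"
    using total[rule_format, of 0 1] False by simp
  have "(\<lambda>a b. R b a) \<in> strict_linorders"
    using irrefl trans total unfolding strict_linorders_def mem_Collect_eq by blast
  then have "(\<lambda>a b. R b a) = (<)"
    by (rule shift_invariant_linorder_less) (simp_all add: inv R10)
  then show ?thesis by blast
qed

text \<open>If \<open>(Sinf, E)\<close> is relatively extremely amenable, then \<open>E\<close> fixes a strict linear order:
  apply the definition to the space of orders, transported into \<open>(int \<Rightarrow> int) set set\<close>.\<close>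
lemma rel_ext_amenable_fixed_linorder:
  assumes amen: "rel_ext_amenable TYPE((int \<Rightarrow> int) set set) Sinf E"
  obtains R0 where "R0 \<in> strict_linorders" "\<And>h. h \<in> E \<Longrightarrow> order_act h R0 = R0"
proof -
  let ?enc = encode_relation
  let ?X = "pullback_topology (?enc ` strict_linorders) (inv ?enc) (top_of_set strict_linorders)"
  have "G_space Sinf ?X (\<lambda>g y. ?enc (order_act g (inv ?enc y)))"
      and top: "topspace ?X = ?enc ` strict_linorders"
    using G_space_transfer[OF G_space_strict_linorders inj_encode_relation] by simp_all
  with amen obtain y0 where y0: "y0 \<in> topspace ?X" "\<forall>h\<in>E. ?enc (order_act h (inv ?enc y0)) = y0"
    unfolding rel_ext_amenable_def by blast
  then obtain R0 where R0: "R0 \<in> strict_linorders" "y0 = ?enc R0"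
    using top by auto
  have fixed: "order_act h R0 = R0" if "h \<in> E" for h
  proof -
    have "?enc (order_act h R0) = ?enc R0"
      using y0(2) that R0(2) inj_encode_relation by simp
    then show ?thesis
      using inj_encode_relation by (simp add: inj_eq)
  qed
  show ?thesis
    by (rule that[OF R0(1) fixed])
qed

text \<open>Second half of the theorem: if \<open>(Sinf, E)\<close> is relatively extremely amenable and
  \<open>H_ord \<subseteq> E\<close>, then \<open>E\<close> fixes a strict linear order \<open>R0\<close>; being fixed by all translations,
  \<open>R0\<close> is \<open><\<close> or \<open>>\<close>, and either way every element of \<open>E\<close> preserves \<open><\<close>.\<close>
lemma H_ord_maximal:
  assumes HE: "H_ord \<subseteq> E" and ES: "E \<subseteq> Sinf"
    and amen: "rel_ext_amenable TYPE((int \<Rightarrow> int) set set) Sinf E"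
  shows "E = H_ord"
proof
  obtain R0 where R0: "R0 \<in> strict_linorders" and fixed: "\<And>h. h \<in> E \<Longrightarrow> order_act h R0 = R0"
    using rel_ext_amenable_fixed_linorder[OF amen] by blast
  have "R0 (a + c) (b + c) = R0 a b" for a b c
  proof -
    have "shift (- c) \<in> E"
      using shift_H_ord HE by blast
    then have fixed_shift: "order_act (shift (- c)) R0 = R0"
      by (rule fixed)
    show ?thesis
      using fun_cong[OF fun_cong[OF fixed_shift, of a], of b] by (simp add: order_act_shift)
  qed
  then have R0_cases: "R0 = (<) \<or> (\<lambda>a b. R0 b a) = (<)"
    by (rule shift_invariant_linorder[OF R0(1)])
  show "E \<subseteq> H_ord"
  proof
    fix h assume h: "h \<in> E"
    have pointwise: "R0 (inv h a) (inv h b) = R0 a b" for a b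
      using fun_cong[OF fun_cong[OF fixed[OF h], of a], of b] by (simp add: order_act_def)
    have "order_act h (\<lambda>a b. R0 b a) = (\<lambda>a b. R0 b a)"
      unfolding order_act_def using pointwise by simp
    then have "order_act h (<) = (<)"
      using R0_cases fixed[OF h] by (elim disjE) simp_all
    then show "h \<in> H_ord"
      using h ES by (auto simp: H_ord_def)
  qed
qed (rule HE)

theorem mainTheorem8:
  shows "rel_ext_amenable TYPE('a) Sinf H_ord \<and>
    (\<forall>E. perm_subgroup E Sinf \<and> H_ord \<subseteq> E \<and> E \<subseteq> Sinf \<and>
         rel_ext_amenable TYPE((int \<Rightarrow> int) set set) Sinf E \<longrightarrow> E = H_ord)"
  using rel_ext_amenable_H_ord H_ord_maximal by blast

end
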